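(* Let $k\le n$ be a positive integer and $\epsilon\in(0,1)$. Suppose $f:2^E\times O^E\to\mathbb{R}_{\ge0}$ is worst-case monotone and worst-case submodular with respect to $p(\phi)$ and satisfies minimal dependency. Let $\pi^f$ be the adaptive stochastic worst-case greedy policy with parameters $k,\epsilon$, and let $\pi^*_{wc}$ maximize $f_{wc}(\pi)$ over all deterministic policies $\pi$ with $|E(\pi,\phi)|\le k$ for all $\phi\in U^+$. Then $$\tilde f_{wc}(\pi^f)\ \ge\ \Big(1-\frac1e-\epsilon\Big)f_{wc}(\pi^*_{wc}),$$ and $\pi^f$ performs a total of $O(n\log(1/\epsilon))$ evaluations of worst-case marginal utilities $f_{wc}(e\mid\psi)$.
   Context: Setting. $E$ is a finite set of $n$ items and $O$ a finite set of states. A realization is a function $\phi:E\to O$; $p$ is a probability distribution (prior) on the set of all realizations, $\Phi$ denotes a random realization with law $p$, and $U^+=\{\phi: p(\phi)>0\}$. A partial realization is a function $\psi:S\to O$ with $S\subseteq E$, $\mathrm{dom}(\psi)=S$; it is identified with the set of pairs $\{(e,\psi(e)):e\in S\}$, so $\psi\subseteq\psi'$ means $\mathrm{dom}(\psi)\subseteq\mathrm{dom}(\psi')$ and they agree on $\mathrm{dom}(\psi)$. A realization $\phi$ is consistent with $\psi$, written $\phi\sim\psi$, if it agrees with $\psi$ on $\mathrm{dom}(\psi)$. Only partial realizations with $\Pr[\Phi\sim\psi]>0$ are considered, and $p(\phi\mid\psi)=\Pr[\Phi=\phi\mid\Phi\sim\psi]$. For $S\subseteq E$ and a partial realization $\psi$,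 $f(S,\psi)=\mathbb{E}[f(S,\Phi)\mid\Phi\sim\psi]$. For $e\notin\mathrm{dom}(\psi)$, let $O(e,\psi)=\{o\in O:\exists\phi\text{ with }p(\phi\mid\psi)>0,\ \phi(e)=o\}$ and define the worst-case marginal utility $f_{wc}(e\mid\psi)=\min_{o\in O(e,\psi)}\{f(\mathrm{dom}(\psi)\cup\{e\},\psi\cup\{(e,o)\})-f(\mathrm{dom}(\psi),\psi)\}$. $f$ is worst-case submodular if $f_{wc}(e\mid\psi)\ge f_{wc}(e\mid\psi')$ for all partial realizations $\psi\subseteq\psi'$ and all $e\in E\setminus\mathrm{dom}(\psi')$; it is worst-case monotone if $f_{wc}(e\mid\psi)\ge0$ for all $\psi$ and $e\notin\mathrm{dom}(\psi)$. $f$ satisfies minimal dependency if $f(\mathrm{dom}(\psi),\psi)=f(\mathrm{dom}(\psi),\phi)$ for every partial realization $\psi$ and every $\phi\in U^+$ with $\phi\sim\psi$. Policies. A (deterministic) policy $\pi$ is a rule which, given the current observation (the partial realization of the items selected so far), either selects a new item or stops; after an item $e$ is selected under realization $\phi$, the state $\phi(e)$ is observed. A randomized policy may additionally use internal randomness independent of $\Phi$. $E(\pi,\phi)$ is the (possibly random) set of items selected by $\pi$ under $\phi$. For deterministic $\pi$, $f_{wc}(\pi)=\min_{\phi\in U^+}f(E(\pi,\phi),\phi)$; for a randomized policy the expected worst-case utility is $\tilde f_{wc}(\pi)=\min_{\phi\in U^+}\mathbb{E}[f(E(\pi,\phi),\phi)]$, the expectation over the policy's internal randomness. Adaptive stochastic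 worst-case greedy policy $\pi^f$: let $s=\lceil\frac nk\ln\frac1\epsilon\rceil$. Start with $\psi_0=\emptyset$; for $t=1,\dots,k$, draw a set $H$ uniformly at random among subsets of $E\setminus\mathrm{dom}(\psi_{t-1})$ of size $\min\{s,n-t+1\}$ (independently of everything else), select $e_t\in\arg\max_{e\in H}f_{wc}(e\mid\psi_{t-1})$, observe $\Phi(e_t)$, and set $\psi_t=\psi_{t-1}\cup\{(e_t,\Phi(e_t))\}$. *)

theory Defs
  imports "HOL-Probability.Probability"
begin

text \<open>Items are the elements of a finite type 'e (E = UNIV, n = CARD('e)),
states the elements of a finite type 'o (O = UNIV).  A realization is a
function 'e \<Rightarrow> 'o, a partial realization is a map 'e \<rightharpoonup> 'o;
psi \<subseteq> psi' is map_le.\<close>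

definition consistent :: "('e \<Rightarrow> 'o) \<Rightarrow> ('e \<rightharpoonup> 'o) \<Rightarrow> bool" where
  "consistent phi psi \<longleftrightarrow> (\<forall>e\<in>dom psi. psi e = Some (phi e))"

definition pr_cons :: "(('e::finite \<Rightarrow> 'o::finite) \<Rightarrow> real) \<Rightarrow> ('e \<rightharpoonup> 'o) \<Rightarrow> real" where
  "pr_cons p psi = (\<Sum>phi | consistent phi psi. p phi)"

definition valid_partial :: "(('e::finite \<Rightarrow> 'o::finite) \<Rightarrow> real) \<Rightarrow> ('e \<rightharpoonup> 'o) \<Rightarrow> bool" where
  "valid_partial p psi \<longleftrightarrow> pr_cons p psi > 0"

definition fcond :: "(('e::finite \<Rightarrow> 'o::finite) \<Rightarrow> real) \<Rightarrow> ('e set \<Rightarrow> ('e \<Rightarrow> 'o) \<Rightarrow> real)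
    \<Rightarrow> 'e set \<Rightarrow> ('e \<rightharpoonup> 'o) \<Rightarrow> real" where
  "fcond p f S psi = (\<Sum>phi | consistent phi psi. p phi * f S phi) / pr_cons p psi"

definition states_of :: "(('e::finite \<Rightarrow> 'o::finite) \<Rightarrow> real) \<Rightarrow> 'e \<Rightarrow> ('e \<rightharpoonup> 'o) \<Rightarrow> 'o set" where
  "states_of p e psi = {st. \<exists>phi. p phi > 0 \<and> consistent phi psi \<and> phi e = st}"

definition fwc :: "(('e::finite \<Rightarrow> 'o::finite) \<Rightarrow> real) \<Rightarrow> ('e set \<Rightarrow> ('e \<Rightarrow> 'o) \<Rightarrow> real)
    \<Rightarrow> 'e \<Rightarrow> ('e \<rightharpoonup> 'o) \<Rightarrow> real" where
  "fwc p f e psi = Min ((\<lambda>st. fcond p f (insert e (dom psi)) (psi(e \<mapsto> st)) - fcond p f (dom psi) psi)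
                        ` states_of p e psi)"

definition wc_submodular :: "(('e::finite \<Rightarrow> 'o::finite) \<Rightarrow> real) \<Rightarrow> ('e set \<Rightarrow> ('e \<Rightarrow> 'o) \<Rightarrow> real) \<Rightarrow> bool" where
  "wc_submodular p f \<longleftrightarrow> (\<forall>psi psi' e. valid_partial p psi \<longrightarrow> valid_partial p psi' \<longrightarrow>
      psi \<subseteq>\<^sub>m psi' \<longrightarrow> e \<notin> dom psi' \<longrightarrow> fwc p f e psi \<ge> fwc p f e psi')"

definition wc_monotone :: "(('e::finite \<Rightarrow> 'o::finite) \<Rightarrow> real) \<Rightarrow> ('e set \<Rightarrow> ('e \<Rightarrow> 'o) \<Rightarrow> real) \<Rightarrow> bool" where
  "wc_monotone p f \<longleftrightarrow> (\<forall>psi e. valid_partial p psi \<longrightarrow> e \<notin> dom psi \<longrightarrow> fwc p f e psi \<ge> 0)"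

definition minimal_dependency :: "(('e::finite \<Rightarrow> 'o::finite) \<Rightarrow> real) \<Rightarrow> ('e set \<Rightarrow> ('e \<Rightarrow> 'o) \<Rightarrow> real) \<Rightarrow> bool" where
  "minimal_dependency p f \<longleftrightarrow> (\<forall>psi phi. valid_partial p psi \<longrightarrow> p phi > 0 \<longrightarrow> consistent phi psi \<longrightarrow>
      fcond p f (dom psi) psi = f (dom psi) phi)"

text \<open>Deterministic policies: given the current observation, return Some e
(select e) or None (stop).  Selecting an already selected item is treated as stopping.
After CARD('e) steps no new item can be selected, so the run has terminated.\<close>

type_synonym ('e, 'o) policy = "('e \<rightharpoonup> 'o) \<Rightarrow> 'e option"

definition policy_step :: "('e, 'o) policy \<Rightarrow> ('e \<Rightarrow> 'o) \<Rightarrow> ('e \<rightharpoonup> 'o) \<Rightarrow> ('e \<rightharpoonup> 'o)" where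
  "policy_step pol phi psi = (case pol psi of None \<Rightarrow> psi
      | Some e \<Rightarrow> (if e \<in> dom psi then psi else psi(e \<mapsto> phi e)))"

definition selected :: "('e::finite, 'o) policy \<Rightarrow> ('e \<Rightarrow> 'o) \<Rightarrow> 'e set" where
  "selected pol phi = dom ((policy_step pol phi ^^ CARD('e)) Map.empty)"

definition fwc_policy :: "(('e::finite \<Rightarrow> 'o::finite) \<Rightarrow> real) \<Rightarrow> ('e set \<Rightarrow> ('e \<Rightarrow> 'o) \<Rightarrow> real)
    \<Rightarrow> ('e, 'o) policy \<Rightarrow> real" where
  "fwc_policy p f pol = Min ((\<lambda>phi. f (selected pol phi) phi) ` {phi. p phi > 0})"

text \<open>The adaptive stochastic worst-case greedy policy.  sel H psi is the
(tie-breaking) choice of an element of argmax_{e in H} fwc(e|psi).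
greedy_run ... s phi t is the distribution of (psi_t, number of evaluations of
fwc performed in steps 1..t) under realization phi.\<close>

definition greedy_size :: "nat \<Rightarrow> nat \<Rightarrow> real \<Rightarrow> nat" where
  "greedy_size n k eps = nat \<lceil>real n / real k * ln (1 / eps)\<rceil>"

fun greedy_run :: "('e set \<Rightarrow> ('e \<rightharpoonup> 'o) \<Rightarrow> 'e) \<Rightarrow> nat \<Rightarrow> ('e::finite \<Rightarrow> 'o)
    \<Rightarrow> nat \<Rightarrow> (('e \<rightharpoonup> 'o) \<times> nat) pmf" where
  "greedy_run sel s phi 0 = return_pmf (Map.empty, 0)"
| "greedy_run sel s phi (Suc t) =
     bind_pmf (greedy_run sel s phi t) (\<lambda>(psi, c).
       bind_pmf (pmf_of_set {H. H \<subseteq> - dom psi \<and> card H = min s (CARD('e) - t)}) (\<lambda>H.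
         return_pmf (psi(sel H psi \<mapsto> phi (sel H psi)), c + card H)))"

definition greedy_selector :: "(('e::finite \<Rightarrow> 'o::finite) \<Rightarrow> real) \<Rightarrow> ('e set \<Rightarrow> ('e \<Rightarrow> 'o) \<Rightarrow> real)
    \<Rightarrow> ('e set \<Rightarrow> ('e \<rightharpoonup> 'o) \<Rightarrow> 'e) \<Rightarrow> bool" where
  "greedy_selector p f sel \<longleftrightarrow> (\<forall>H psi. H \<noteq> {} \<longrightarrow> H \<inter> dom psi = {} \<longrightarrow> valid_partial p psi \<longrightarrow>
      sel H psi \<in> H \<and> (\<forall>e\<in>H. fwc p f e psi \<le> fwc p f (sel H psi) psi))"

definition greedy_value :: "(('e::finite \<Rightarrow> 'o::finite) \<Rightarrow> real) \<Rightarrow> ('e set \<Rightarrow> ('e \<Rightarrow> 'o) \<Rightarrow> real)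
    \<Rightarrow> ('e set \<Rightarrow> ('e \<rightharpoonup> 'o) \<Rightarrow> 'e) \<Rightarrow> nat \<Rightarrow> nat \<Rightarrow> real" where
  "greedy_value p f sel s k = Min ((\<lambda>phi. measure_pmf.expectation (greedy_run sel s phi k)
       (\<lambda>x. f (dom (fst x)) phi)) ` {phi. p phi > 0})"

end

theory Submission
  imports Defs
begin

text \<open>
Two facts drive the proof.  First, any policy of budget \<open>k\<close> can be beaten by an adversary
that, after an observation \<open>psi\<close> of the greedy run, reveals \<open>psi\<close> where it is defined and
otherwise answers each query with a worst-case state; by worst-case submodularity the
resulting realizable run gains at most the sum of \<open>f\<^sub>w\<^sub>c(e | psi)\<close> over at most \<open>k\<close> fresh items
\<open>M\<close>, so the optimum exceeds \<open>f(psi)\<close> by at most that sum.  Second, a uniformly random candidate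
set of size \<open>s \<ge> (n/k) ln(1/eps)\<close> meets \<open>M\<close> with probability at least \<open>|M| (1 - eps)/k\<close>, and
by symmetry the greedy choice then gains in expectation at least \<open>(1 - eps)/k\<close> times that sum.
Hence the gap to the optimum shrinks by a factor \<open>1 - (1 - eps)/k\<close> per step, and
\<open>(1 - (1 - eps)/k)\<^sup>k \<le> 1/e + eps\<close>.  Each step evaluates \<open>s\<close> marginals, \<open>k s \<le> n ln(1/eps) + k\<close>.
\<close>

lemma finite_states_of [simp]: "finite (states_of p e psi)"
  by (rule finite_subset[of _ UNIV]) auto

lemma consistent_restrict_map: "consistent phi (restrict_map (Some \<circ> phi) S)"
  unfolding consistent_def by (auto simp: restrict_map_def split: if_splits)

lemma consistent_upd: "consistent phi psi \<Longrightarrow> consistent phi (psi(e \<mapsto> phi e))"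
  unfolding consistent_def by auto

locale realization_prior =
  fixes p :: "('e::finite \<Rightarrow> 'o::finite) \<Rightarrow> real"
  assumes p_nonneg: "\<forall>phi. p phi \<ge> 0"
begin

lemma valid_partial_obtain_realization:
  assumes "valid_partial p psi"
  obtains phi where "p phi > 0" "consistent phi psi"
proof -
  have "\<not> (\<forall>phi. consistent phi psi \<longrightarrow> p phi \<le> 0)"
  proof
    assume "\<forall>phi. consistent phi psi \<longrightarrow> p phi \<le> 0"
    then have "pr_cons p psi \<le> 0"
      unfolding pr_cons_def by (intro sum_nonpos) auto
    with assms show False unfolding valid_partial_def by simp
  qed
  with that show ?thesis by (meson not_le)
qed

lemma valid_partial_if_consistent:
  assumes "p phi > 0" "consistent phi psi"
  shows "valid_partial p psi"
proof -
  have "p phi \<le> pr_cons p psi"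
    unfolding pr_cons_def using assms p_nonneg by (intro member_le_sum) auto
  then show ?thesis using assms unfolding valid_partial_def by simp
qed

lemma realization_in_states_of: "p phi > 0 \<Longrightarrow> consistent phi psi \<Longrightarrow> phi e \<in> states_of p e psi"
  unfolding states_of_def by auto

lemma states_of_nonempty: "valid_partial p psi \<Longrightarrow> states_of p e psi \<noteq> {}"
  by (metis empty_iff realization_in_states_of valid_partial_obtain_realization)

lemma valid_partial_upd_state:
  assumes "st \<in> states_of p e psi" "e \<notin> dom psi"
  shows "valid_partial p (psi(e \<mapsto> st))"
proof -
  from assms(1) obtain phi where "p phi > 0" "consistent phi psi" "phi e = st"
    unfolding states_of_def by auto
  with assms(2) show ?thesis
    by (intro valid_partial_if_consistent[of phi]) (auto simp: consistent_def)
qed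

lemma fwc_le_marginal:
  "st \<in> states_of p e psi \<Longrightarrow>
    fwc p f e psi \<le> fcond p f (insert e (dom psi)) (psi(e \<mapsto> st)) - fcond p f (dom psi) psi"
  unfolding fwc_def by (intro Min_le) auto

lemma fwc_attained:
  assumes "valid_partial p psi"
  shows "\<exists>st\<in>states_of p e psi.
    fwc p f e psi = fcond p f (insert e (dom psi)) (psi(e \<mapsto> st)) - fcond p f (dom psi) psi"
proof -
  have "fwc p f e psi \<in> (\<lambda>st. fcond p f (insert e (dom psi)) (psi(e \<mapsto> st)) - fcond p f (dom psi) psi)
      ` states_of p e psi"
    unfolding fwc_def using states_of_nonempty[OF assms] by (intro Min_in) auto
  then show ?thesis by auto
qed

end

locale worst_case_setting = realization_prior p
  for p :: "('e::finite \<Rightarrow> 'o::finite) \<Rightarrow> real" +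
  fixes f :: "'e set \<Rightarrow> ('e \<Rightarrow> 'o) \<Rightarrow> real"
  assumes mono: "wc_monotone p f"
    and submod: "wc_submodular p f"
    and mindep: "minimal_dependency p f"
begin

lemma fcond_eq_realization:
  "p phi > 0 \<Longrightarrow> consistent phi psi \<Longrightarrow> fcond p f (dom psi) psi = f (dom psi) phi"
  using mindep valid_partial_if_consistent unfolding minimal_dependency_def by blast

lemma fwc_le_realization_gain:
  assumes "p phi > 0" "consistent phi psi"
  shows "fwc p f e psi \<le> f (insert e (dom psi)) phi - f (dom psi) phi"
proof -
  have "fcond p f (insert e (dom psi)) (psi(e \<mapsto> phi e)) = f (insert e (dom psi)) phi"
    using fcond_eq_realization[OF assms(1) consistent_upd[OF assms(2)]] by simp
  then show ?thesis
    using fwc_le_marginal[OF realization_in_states_of[OF assms, of e], of f] fcond_eq_realization[OF assms]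
    by simp
qed

lemma fwc_nonneg: "valid_partial p psi \<Longrightarrow> e \<notin> dom psi \<Longrightarrow> 0 \<le> fwc p f e psi"
  using mono unfolding wc_monotone_def by blast

lemma f_mono_insert:
  assumes "p phi > 0" "e \<notin> S"
  shows "f S phi \<le> f (insert e S) phi"
proof -
  let ?psi = "restrict_map (Some \<circ> phi) S"
  have "dom ?psi = S" by auto
  have "0 \<le> fwc p f e ?psi"
    using assms by (intro fwc_nonneg valid_partial_if_consistent[OF _ consistent_restrict_map]) auto
  also have "\<dots> \<le> f (insert e S) phi - f S phi"
    using fwc_le_realization_gain[OF assms(1) consistent_restrict_map[of phi S], of e]
    unfolding \<open>dom ?psi = S\<close> .
  finally show ?thesis by simp
qed

lemma f_mono:
  assumes "p phi > 0" "S \<subseteq> T"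
  shows "f S phi \<le> f T phi"
proof -
  have "f S phi \<le> f (S \<union> D) phi" if "finite D" for D
    using that
  proof (induction D rule: finite_induct)
    case (insert x D)
    then show ?case
      using f_mono_insert[OF assms(1), of x "S \<union> D"] by (cases "x \<in> S \<union> D") (auto simp: insert_absorb)
  qed simp
  from this[of T] assms(2) show ?thesis by (simp add: sup.absorb2)
qed

section \<open>An adversary against an arbitrary policy\<close>

definition worst_state :: "'e \<Rightarrow> ('e \<rightharpoonup> 'o) \<Rightarrow> 'o" where
  "worst_state e C = (SOME st. st \<in> states_of p e C \<and>
     fwc p f e C = fcond p f (insert e (dom C)) (C(e \<mapsto> st)) - fcond p f (dom C) C)"

text \<open>The adversary answers the queries of \<open>pol\<close> by \<open>psi\<close> where it is defined and by a state
attaining \<open>f\<^sub>w\<^sub>c(e | psi ++ q)\<close> elsewhere, \<open>q\<close> being the answers given so far.\<close>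

definition adversary_step :: "('e, 'o) policy \<Rightarrow> ('e \<rightharpoonup> 'o) \<Rightarrow> ('e \<rightharpoonup> 'o) \<Rightarrow> ('e \<rightharpoonup> 'o)" where
  "adversary_step pol psi q = (case pol q of None \<Rightarrow> q
     | Some e \<Rightarrow> (if e \<in> dom q then q else if e \<in> dom psi then q(e := psi e)
                   else q(e \<mapsto> worst_state e (psi ++ q))))"

definition adversary_run :: "('e, 'o) policy \<Rightarrow> ('e \<rightharpoonup> 'o) \<Rightarrow> nat \<Rightarrow> ('e \<rightharpoonup> 'o)" where
  "adversary_run pol psi j = (adversary_step pol psi ^^ j) Map.empty"

definition adversary_invariant :: "('e \<rightharpoonup> 'o) \<Rightarrow> ('e \<rightharpoonup> 'o) \<Rightarrow> bool" where
  "adversary_invariant psi q \<longleftrightarrow> (\<forall>e\<in>dom psi \<inter> dom q. q e = psi e) \<and> valid_partial p (psi ++ q) \<and>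
     fcond p f (dom (psi ++ q)) (psi ++ q) - fcond p f (dom psi) psi \<le> (\<Sum>e\<in>dom q - dom psi. fwc p f e psi)"

lemma worst_state_attains_fwc:
  assumes "valid_partial p C"
  shows "worst_state e C \<in> states_of p e C"
    and "fwc p f e C = fcond p f (insert e (dom C)) (C(e \<mapsto> worst_state e C)) - fcond p f (dom C) C"
  using someI_ex[OF fwc_attained[OF assms, of e f, unfolded Bex_def]]
  unfolding worst_state_def by blast+

lemma map_le_map_add_if_agree: "\<forall>e\<in>dom psi \<inter> dom q. q e = psi e \<Longrightarrow> psi \<subseteq>\<^sub>m psi ++ q"
  unfolding map_le_def map_add_def by (force split: option.splits)

lemma adversary_invariant_step:
  assumes v: "valid_partial p psi" and I: "adversary_invariant psi q"
  shows "adversary_invariant psi (adversary_step pol psi q)"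
proof (cases "\<exists>e. pol q = Some e \<and> e \<notin> dom q")
  case False
  then have "adversary_step pol psi q = q"
    unfolding adversary_step_def by (auto split: option.split)
  with I show ?thesis by simp
next
  case True
  then obtain e where pol: "pol q = Some e" and nq: "e \<notin> dom q" by blast
  show ?thesis
  proof (cases "e \<in> dom psi")
    case True
    then obtain y where y: "psi e = Some y" by auto
    have "adversary_step pol psi q = q(e \<mapsto> y)"
      using pol nq y True by (simp add: adversary_step_def)
    moreover have "psi ++ q(e \<mapsto> y) = psi ++ q"
      using nq y by (auto simp: fun_eq_iff map_add_def domIff split: option.splits)
    moreover have "dom (q(e \<mapsto> y)) - dom psi = dom q - dom psi" using True by auto
    ultimately show ?thesis using I y unfolding adversary_invariant_def by auto
  next
    case np: False
    define C where "C = psi ++ q"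
    define st where "st = worst_state e C"
    have vC: "valid_partial p C" using I unfolding adversary_invariant_def C_def by simp
    have eC: "e \<notin> dom C" using nq np unfolding C_def by auto
    have step: "adversary_step pol psi q = q(e \<mapsto> st)"
      using pol nq np by (simp add: adversary_step_def st_def C_def)
    have "psi \<subseteq>\<^sub>m C"
      unfolding C_def by (rule map_le_map_add_if_agree) (use I in \<open>simp add: adversary_invariant_def\<close>)
    then have sub: "fwc p f e C \<le> fwc p f e psi"
      using submod v vC eC unfolding wc_submodular_def by blast
    have "fcond p f (dom (C(e \<mapsto> st))) (C(e \<mapsto> st)) - fcond p f (dom psi) psi
          = fwc p f e C + (fcond p f (dom C) C - fcond p f (dom psi) psi)"
      using worst_state_attains_fwc(2)[OF vC, of e] unfolding st_def by simp
    also have "\<dots> \<le> fwc p f e psi + (\<Sum>e\<in>dom q - dom psi. fwc p f e psi)"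
      using sub I unfolding adversary_invariant_def C_def by simp
    also have "\<dots> = (\<Sum>e\<in>dom (q(e \<mapsto> st)) - dom psi. fwc p f e psi)"
      using nq np by (simp add: insert_Diff_if)
    finally show ?thesis
      using I np valid_partial_upd_state[OF worst_state_attains_fwc(1)[OF vC] eC]
      unfolding adversary_invariant_def step C_def st_def by auto
  qed
qed

lemma adversary_invariant_run:
  assumes "valid_partial p psi"
  shows "adversary_invariant psi (adversary_run pol psi j)"
  unfolding adversary_run_def
proof (induction j)
  case 0
  then show ?case using assms by (simp add: adversary_invariant_def)
qed (simp add: adversary_invariant_step[OF assms])

lemma adversary_step_cases:
  obtains "adversary_step pol psi q = q"
  | e st where "pol q = Some e" "e \<notin> dom q" "adversary_step pol psi q = q(e \<mapsto> st)"
proof (cases "pol q")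
  case (Some e)
  show ?thesis
  proof (cases "e \<in> dom q")
    case nq: False
    show ?thesis
      by (rule that(2)[OF Some nq, of "if e \<in> dom psi then the (psi e) else worst_state e (psi ++ q)"])
        (use Some nq in \<open>auto simp: adversary_step_def\<close>)
  qed (use that(1) Some in \<open>simp add: adversary_step_def\<close>)
qed (use that(1) in \<open>simp add: adversary_step_def\<close>)

lemma adversary_run_mono: "i \<le> j \<Longrightarrow> adversary_run pol psi i \<subseteq>\<^sub>m adversary_run pol psi j"
proof (induction j)
  case (Suc j)
  have "adversary_run pol psi j \<subseteq>\<^sub>m adversary_run pol psi (Suc j)"
    unfolding adversary_run_def funpow.simps o_apply
    by (cases rule: adversary_step_cases[of pol psi "(adversary_step pol psi ^^ j) Map.empty"])
       (auto simp: map_le_def domIff)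
  with Suc show ?case by (cases "i = Suc j") (auto intro: map_le_trans)
qed (simp add: map_le_refl)

lemma policy_run_eq_adversary_run:
  assumes cons: "consistent phi (adversary_run pol psi N)" and "j \<le> N"
  shows "(policy_step pol phi ^^ j) Map.empty = adversary_run pol psi j"
  using assms(2)
proof (induction j)
  case 0
  then show ?case by (simp add: adversary_run_def)
next
  case (Suc j)
  let ?q = "adversary_run pol psi j"
  have run_Suc: "adversary_run pol psi (Suc j) = adversary_step pol psi ?q"
    by (simp add: adversary_run_def)
  have "policy_step pol phi ?q = adversary_step pol psi ?q"
  proof (cases rule: adversary_step_cases[of pol psi ?q])
    case 1
    then show ?thesis
      unfolding policy_step_def adversary_step_def
      by (auto split: option.splits if_splits simp: fun_eq_iff) metis
  next
    case (2 e st)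
    have "adversary_run pol psi N e = Some st"
      using adversary_run_mono[OF Suc.prems, of pol psi] 2(3) run_Suc unfolding map_le_def by force
    then have "st = phi e"
      using cons unfolding consistent_def by force
    with 2 show ?thesis unfolding policy_step_def by simp
  qed
  with Suc run_Suc show ?case by simp
qed

lemma fwc_policy_le_marginal_sum:
  fixes pol :: "('e, 'o) policy"
  assumes v: "valid_partial p psi" and budget: "\<forall>phi. p phi > 0 \<longrightarrow> card (selected pol phi) \<le> k"
  shows "\<exists>M. M \<inter> dom psi = {} \<and> card M \<le> k \<and>
     fwc_policy p f pol \<le> fcond p f (dom psi) psi + (\<Sum>e\<in>M. fwc p f e psi)"
proof -
  define q where "q = adversary_run pol psi CARD('e)"
  have I: "adversary_invariant psi q" unfolding q_def by (rule adversary_invariant_run[OF v])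
  then have vq: "valid_partial p (psi ++ q)" unfolding adversary_invariant_def by simp
  obtain phi where pp: "p phi > 0" and cons: "consistent phi (psi ++ q)"
    using valid_partial_obtain_realization[OF vq] by blast
  have "consistent phi q"
    using cons unfolding consistent_def by (auto simp: map_add_def split: option.splits)
  then have sel_q: "selected pol phi = dom q"
    unfolding selected_def using policy_run_eq_adversary_run[of phi pol psi "CARD('e)"] q_def by simp
  define M where "M = dom q - dom psi"
  have "card M \<le> k"
    using card_mono[of "dom q" M] budget pp sel_q unfolding M_def by fastforce
  moreover have "fwc_policy p f pol \<le> fcond p f (dom psi) psi + (\<Sum>e\<in>M. fwc p f e psi)"
  proof -
    have "fwc_policy p f pol \<le> f (selected pol phi) phi"
      unfolding fwc_policy_def using pp by (intro Min_le) auto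
    also have "\<dots> \<le> f (dom (psi ++ q)) phi" unfolding sel_q by (rule f_mono[OF pp]) auto
    also have "\<dots> = fcond p f (dom (psi ++ q)) (psi ++ q)"
      using fcond_eq_realization[OF pp cons] by simp
    also have "\<dots> \<le> fcond p f (dom psi) psi + (\<Sum>e\<in>M. fwc p f e psi)"
      using I unfolding adversary_invariant_def M_def by simp
    finally show ?thesis .
  qed
  ultimately show ?thesis unfolding M_def by blast
qed

end

section \<open>Random subsets\<close>

lemma binomial_mult_power_le:
  fixes a r h :: nat
  assumes "a \<le> r"
  shows "real (a choose h) * real r ^ h \<le> real (r choose h) * real a ^ h"
proof (induction h)
  case (Suc h)
  have absorb: "real (Suc h) * real (b choose Suc h) = real (b - h) * real (b choose h)" for b
    using binomial_absorption[of h b] binomial_absorb_comp[of b h] by (metis of_nat_mult)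
  have ratio: "real (a - h) * real r \<le> real (r - h) * real a"
  proof (cases "h \<le> a")
    case True
    have "real a * real h \<le> real r * real h" using assms by (intro mult_right_mono) auto
    with True assms show ?thesis by (simp add: of_nat_diff algebra_simps)
  qed simp
  have "real (Suc h) * (real (a choose Suc h) * real r ^ Suc h)
        = real r * real r ^ h * (real (Suc h) * real (a choose Suc h))"
    by (simp only: power_Suc mult_ac)
  also have "\<dots> = (real (a - h) * real r) * (real (a choose h) * real r ^ h)"
    unfolding absorb by (simp only: mult_ac)
  also have "\<dots> \<le> (real (r - h) * real a) * (real (r choose h) * real a ^ h)"
    by (intro mult_mono Suc.IH ratio) auto
  also have "\<dots> = real a * real a ^ h * (real (Suc h) * real (r choose Suc h))"
    unfolding absorb by (simp only: mult_ac)
  also have "\<dots> = real (Suc h) * (real (r choose Suc h) * real a ^ Suc h)"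
    by (simp only: power_Suc mult_ac)
  finally show ?case by (simp del: of_nat_Suc)
qed simp

lemma exp_neg_mult_le_convex_comb:
  fixes x L :: real
  assumes "0 \<le> x" "x \<le> 1"
  shows "exp (- (x * L)) \<le> 1 - x + x * exp (- L)"
  using convex_onD[OF exp_convex, of x 0 "- L"] assms by simp

lemma sum_inverse_overlap_symmetric:
  fixes R M :: "'a set" and h :: nat
  assumes "M \<subseteq> R" "e \<in> M" "e' \<in> M"
  defines "F \<equiv> {H. H \<subseteq> R \<and> card H = h}"
  shows "(\<Sum>H\<in>F. if e \<in> H then 1 / real (card (H \<inter> M)) else 0)
       = (\<Sum>H\<in>F. if e' \<in> H then 1 / real (card (H \<inter> M)) else 0)"
proof -
  let ?t = "Transposition.transpose e e'"
  have "e \<in> R" "e' \<in> R" using assms by auto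
  then have R: "?t ` R = R" and M: "?t ` M = M" using assms by simp_all
  have into_R: "?t ` H \<subseteq> R" if "H \<subseteq> R" for H
    using image_mono[OF that, of ?t] R by simp
  have bij: "bij_betw (image ?t) F F"
    unfolding F_def by (intro bij_betwI[where g="image ?t"]) (auto simp: card_image image_image into_R)
  have card_eq: "card (?t ` H \<inter> M) = card (H \<inter> M)" for H
    using M image_Int[OF inj_on_transpose[of e e' UNIV], of H M]
      card_image[OF inj_on_transpose[of e e' "H \<inter> M"]] by simp
  have mem_iff: "e' \<in> ?t ` H \<longleftrightarrow> e \<in> H" for H
    by (metis inj_image_mem_iff inj_on_transpose transpose_apply_first)
  have "(\<Sum>H\<in>F. if e' \<in> H then 1 / real (card (H \<inter> M)) else 0)
      = (\<Sum>H\<in>F. if e' \<in> ?t ` H then 1 / real (card (?t ` H \<inter> M)) else 0)"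
    by (rule sum.reindex_bij_betw[OF bij, symmetric])
  also have "\<dots> = (\<Sum>H\<in>F. if e \<in> H then 1 / real (card (H \<inter> M)) else 0)"
    by (simp only: mem_iff card_eq)
  finally show ?thesis by simp
qed


text \<open>The ratio is the probability that a uniformly random \<open>h\<close>-subset of an \<open>r\<close>-set misses a
fixed \<open>m\<close>-subset; it is at most \<open>(1 - m/r)^h \<le> exp (- (m/k) ln (1/eps))\<close>, and convexity of
\<open>exp\<close> on \<open>[- ln (1/eps), 0]\<close> bounds the latter by \<open>1 - (m/k) (1 - eps)\<close>.\<close>

lemma one_minus_binomial_ratio_ge:
  fixes r m h k :: nat and eps :: real
  assumes mr: "m \<le> r" and m1: "1 \<le> m" and mk: "m \<le> k" and hr: "h \<le> r"
    and eps: "0 < eps" "eps < 1"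
    and h_large: "h = r \<or> real r / real k * ln (1 / eps) \<le> real h"
  shows "real m * (1 - eps) / real k \<le> 1 - real ((r - m) choose h) / real (r choose h)"
proof (cases "h = r")
  case True
  then have z: "real ((r - m) choose h) = 0" using m1 mr by simp
  have "real m * (1 - eps) \<le> real k" using mult_left_le[of "1 - eps" "real m"] mk eps by simp
  then show ?thesis unfolding z using m1 mk by (simp add: field_simps)
next
  case False
  with h_large have h_large: "real r / real k * ln (1 / eps) \<le> real h" by simp
  have kpos: "real k > 0" and rpos: "real r > 0" and cpos: "real (r choose h) > 0"
    using m1 mk mr hr by auto
  define x where "x = real m / real k"
  have x01: "0 \<le> x" "x \<le> 1" unfolding x_def using mk kpos by auto
  have "real ((r - m) choose h) * real r ^ h \<le> real (r choose h) * real (r - m) ^ h"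
    by (rule binomial_mult_power_le) simp
  then have "real ((r - m) choose h) / real (r choose h) \<le> (1 + (- (real m / real r))) ^ h"
    using cpos rpos mr by (simp add: field_simps power_divide of_nat_diff)
  also have "\<dots> \<le> exp (- (real m / real r)) ^ h"
    by (rule power_mono[OF exp_ge_add_one_self]) (use mr rpos in \<open>simp add: field_simps\<close>)
  also have "\<dots> = exp (- (real m * real h / real r))" by (simp add: exp_of_nat_mult[symmetric])
  also have "\<dots> \<le> exp (- (x * ln (1 / eps)))"
  proof -
    have "x * ln (1 / eps) = real m * (real r / real k * ln (1 / eps)) / real r"
      unfolding x_def using rpos by simp
    also have "\<dots> \<le> real m * real h / real r"
      using h_large rpos by (intro divide_right_mono mult_left_mono) auto
    finally show ?thesis by simp
  qed
  also have "\<dots> \<le> 1 - x + x * eps"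
    using exp_neg_mult_le_convex_comb[OF x01, of "ln (1 / eps)"] eps by (simp add: ln_div)
  finally show ?thesis unfolding x_def using kpos by (simp add: field_simps)
qed

lemma card_subsets_hit_weighted:
  fixes R M :: "'a set" and h :: nat
  assumes fin: "finite R" and MR: "M \<subseteq> R" and e: "e \<in> M"
  shows "real (card M) * (\<Sum>H | H \<subseteq> R \<and> card H = h. if e \<in> H then 1 / real (card (H \<inter> M)) else 0)
       = real (card {H. H \<subseteq> R \<and> card H = h}) - real (card {H. H \<subseteq> R - M \<and> card H = h})"
proof -
  define F where "F = {H. H \<subseteq> R \<and> card H = h}"
  have finF: "finite F" unfolding F_def by (rule finite_subset[of _ "Pow R"]) (use fin in auto)
  have finM: "finite M" using MR fin finite_subset by blast
  have hits: "(\<Sum>e\<in>M. if e \<in> H then 1 / real (card (H \<inter> M)) else 0) = 1 - (if M \<inter> H = {} then 1 else 0)"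
    for H
  proof -
    have "(\<Sum>e\<in>M. if e \<in> H then 1 / real (card (H \<inter> M)) else 0)
        = real (card (M \<inter> H)) / real (card (H \<inter> M))"
      by (simp add: sum.If_cases[OF finM] Int_commute)
    then show ?thesis using finM by (auto simp: Int_commute card_gt_0_iff)
  qed
  have "real (card M) * (\<Sum>H\<in>F. if e \<in> H then 1 / real (card (H \<inter> M)) else 0)
      = (\<Sum>e'\<in>M. \<Sum>H\<in>F. if e \<in> H then 1 / real (card (H \<inter> M)) else 0)"
    by simp
  also have "\<dots> = (\<Sum>e'\<in>M. \<Sum>H\<in>F. if e' \<in> H then 1 / real (card (H \<inter> M)) else 0)"
    unfolding F_def by (rule sum.cong[OF refl]) (use sum_inverse_overlap_symmetric[OF MR e] in blast)
  also have "\<dots> = (\<Sum>H\<in>F. 1 - (if M \<inter> H = {} then 1 else 0))"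
    by (subst sum.swap) (simp only: hits)
  also have "\<dots> = real (card F) - real (card {H \<in> F. M \<inter> H = {}})"
    using finF by (simp add: sum_subtractf sum.If_cases Int_def)
  also have "{H \<in> F. M \<inter> H = {}} = {H. H \<subseteq> R - M \<and> card H = h}"
    unfolding F_def by auto
  finally show ?thesis unfolding F_def by simp
qed

text \<open>Bound \<open>w H\<close> below by the mean of \<open>v\<close> over \<open>H \<inter> M\<close>; summed over all \<open>H\<close>, every item of \<open>M\<close>
receives the same weight, and these weights add up to the number of \<open>H\<close> meeting \<open>M\<close>.\<close>

lemma mean_over_overlap_le:
  fixes v :: "'a \<Rightarrow> real"
  assumes "finite M" "0 \<le> w" "\<And>e. e \<in> H \<Longrightarrow> v e \<le> w"
  shows "(\<Sum>e\<in>M. if e \<in> H then v e / real (card (H \<inter> M)) else 0) \<le> w"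
proof (cases "M \<inter> H = {}")
  case True
  then have "(\<Sum>e\<in>M. if e \<in> H then v e / real (card (H \<inter> M)) else 0) = 0"
    by (intro sum.neutral) auto
  with assms show ?thesis by simp
next
  case False
  have cpos: "real (card (H \<inter> M)) > 0" using False assms(1) by (simp add: card_gt_0_iff Int_commute)
  have "(\<Sum>e\<in>M. if e \<in> H then v e / real (card (H \<inter> M)) else 0)
      = (\<Sum>e\<in>M \<inter> H. v e) / real (card (H \<inter> M))"
    by (simp add: sum.If_cases[OF assms(1)] sum_divide_distrib Int_def)
  also have "\<dots> \<le> (\<Sum>e\<in>M \<inter> H. w) / real (card (H \<inter> M))"
    using assms(3) cpos by (intro divide_right_mono sum_mono) auto
  also have "\<dots> = w" using cpos by (simp add: Int_commute)
  finally show ?thesis .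
qed

lemma average_over_subsets_ge:
  fixes R M :: "'a set" and v :: "'a \<Rightarrow> real" and w :: "'a set \<Rightarrow> real" and h k :: nat
  assumes fin: "finite R" and MR: "M \<subseteq> R" and Mk: "card M \<le> k"
    and v_nonneg: "\<forall>e\<in>R. 0 \<le> v e" and hr: "h \<le> card R"
    and w_nonneg: "\<forall>H. H \<subseteq> R \<and> card H = h \<longrightarrow> 0 \<le> w H"
    and w_ge: "\<forall>H e. H \<subseteq> R \<and> card H = h \<longrightarrow> e \<in> H \<longrightarrow> v e \<le> w H"
    and eps: "0 < eps" "eps < 1"
    and h_large: "h = card R \<or> real (card R) / real k * ln (1 / eps) \<le> real h"
  shows "(1 - eps) / real k * sum v M
    \<le> sum w {H. H \<subseteq> R \<and> card H = h} / real (card {H. H \<subseteq> R \<and> card H = h})"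
proof -
  define F where "F = {H. H \<subseteq> R \<and> card H = h}"
  have cardF: "card F = card R choose h" unfolding F_def by (rule n_subsets[OF fin])
  have cFpos: "real (card F) > 0" using hr unfolding cardF by simp
  have finM: "finite M" using MR fin finite_subset by blast
  have sum_v: "sum v M \<ge> 0" using v_nonneg MR by (intro sum_nonneg) auto
  show ?thesis
  proof (cases "M = {}")
    case True
    have "sum w F \<ge> 0" using w_nonneg unfolding F_def by (intro sum_nonneg) auto
    with True show ?thesis unfolding F_def by simp
  next
    case False
    define m where "m = card M"
    have m1: "1 \<le> m" unfolding m_def using False finM by (simp add: Suc_le_eq card_gt_0_iff)
    obtain e0 where e0: "e0 \<in> M" using False by blast
    define c where "c H = real (card (H \<inter> M))" for H
    define A where "A e = (\<Sum>H\<in>F. if e \<in> H then 1 / c H else 0)" for e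
    have A_eq: "A e = A e0" if "e \<in> M" for e
      using sum_inverse_overlap_symmetric[OF MR that e0] unfolding A_def F_def c_def .
    have mean_le: "(\<Sum>e\<in>M. if e \<in> H then v e / c H else 0) \<le> w H" if "H \<in> F" for H
      unfolding c_def using that w_nonneg w_ge finM unfolding F_def
      by (intro mean_over_overlap_le) auto
    have weight: "real m * A e0 = real (card F) - real (card {H. H \<subseteq> R - M \<and> card H = h})"
      using card_subsets_hit_weighted[OF fin MR e0, of h] unfolding A_def F_def c_def m_def .
    have "(1 - eps) / real k * sum v M = (real m * (1 - eps) / real k) * sum v M / real m"
      using m1 by simp
    also have "\<dots> \<le> (1 - real ((card R - m) choose h) / real (card R choose h)) * sum v M / real m"
      using one_minus_binomial_ratio_ge[of m "card R" k h eps] sum_v m1 Mk hr eps h_large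
        card_mono[OF fin MR]
      by (intro divide_right_mono mult_right_mono) (auto simp: m_def)
    also have "\<dots> = A e0 * sum v M / real (card F)"
    proof -
      have "card {H. H \<subseteq> R - M \<and> card H = h} = (card R - m) choose h"
        using n_subsets[of "R - M" h] fin MR finM by (simp add: card_Diff_subset m_def)
      then have eq: "1 - real ((card R - m) choose h) / real (card R choose h) = real m * A e0 / real (card F)"
        using weight cFpos unfolding cardF by (simp add: field_simps)
      show ?thesis unfolding eq using m1 by (simp add: field_simps)
    qed
    also have "\<dots> = (\<Sum>e\<in>M. v e * A e) / real (card F)"
      unfolding sum_distrib_left using A_eq by (intro arg_cong[where f="\<lambda>x. x / _"] sum.cong) auto
    also have "\<dots> = (\<Sum>H\<in>F. \<Sum>e\<in>M. if e \<in> H then v e / c H else 0) / real (card F)"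
      unfolding A_def by (subst sum.swap) (simp add: sum_distrib_left if_distrib cong: if_cong)
    also have "\<dots> \<le> sum w F / real (card F)"
      using mean_le cFpos by (intro divide_right_mono sum_mono) auto
    finally show ?thesis unfolding F_def .
  qed
qed

lemma one_minus_div_power_le:
  fixes eps :: real and k :: nat
  assumes "0 < eps" "eps < 1" "0 < k"
  shows "(1 - (1 - eps) / real k) ^ k \<le> eps + 1 / exp 1"
proof -
  have "(1 - (1 - eps) / real k) ^ k \<le> exp (- ((1 - eps) / real k)) ^ k"
    by (rule power_mono) (use assms exp_ge_add_one_self[of "- ((1 - eps) / real k)"] in auto)
  also have "\<dots> = exp (- ((1 - eps) * 1))"
    using assms by (simp add: exp_of_nat_mult[symmetric])
  also have "\<dots> \<le> 1 - (1 - eps) + (1 - eps) * exp (- 1)"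
    using exp_neg_mult_le_convex_comb[of "1 - eps" 1] assms by simp
  also have "\<dots> \<le> eps + 1 / exp 1" using assms by (simp add: exp_minus field_simps)
  finally show ?thesis .
qed


lemma expectation_bind_pmf_bounded:
  fixes g :: "'b \<Rightarrow> real"
  assumes "\<And>y. \<bar>g y\<bar> \<le> B"
  shows "measure_pmf.expectation (bind_pmf M N) g
    = measure_pmf.expectation M (\<lambda>x. measure_pmf.expectation (N x) g)"
  unfolding measure_pmf_bind
  by (rule integral_bind[where K="count_space UNIV" and B=B and B'=1])
    (use assms in \<open>auto simp: measure_pmf.prob_space_axioms prob_space_imp_subprob_space
      space_subprob_algebra subprob_space_measure_pmf\<close>)

lemma expectation_mono_on_support:
  fixes g h :: "'a \<Rightarrow> real"
  assumes "\<And>x. x \<in> set_pmf M \<Longrightarrow> g x \<le> h x" "\<And>x. \<bar>g x\<bar> \<le> B" "\<And>x. \<bar>h x\<bar> \<le> B'"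
  shows "measure_pmf.expectation M g \<le> measure_pmf.expectation M h"
  using assms
  by (intro integral_mono_AE measure_pmf.integrable_const_bound[where B=B]
      measure_pmf.integrable_const_bound[where B=B'] AE_pmfI) auto

lemma expectation_affine_bounded:
  fixes g :: "'a \<Rightarrow> real"
  assumes "\<And>x. \<bar>g x\<bar> \<le> B"
  shows "measure_pmf.expectation M (\<lambda>x. a * g x + b) = a * measure_pmf.expectation M g + b"
proof -
  have "integrable (measure_pmf M) g"
    using assms by (intro measure_pmf.integrable_const_bound[where B=B]) auto
  then show ?thesis by simp
qed

lemma expectation_bounded:
  fixes g :: "'a \<Rightarrow> real"
  assumes "\<And>x. 0 \<le> g x" "\<And>x. g x \<le> B"
  shows "0 \<le> measure_pmf.expectation M g" "measure_pmf.expectation M g \<le> B"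
  using assms
  by (auto intro!: integral_nonneg_AE measure_pmf.integral_le_const
      measure_pmf.integrable_const_bound[where B=B])

section \<open>The stochastic greedy policy\<close>

locale greedy_setting = worst_case_setting p f
  for p :: "('e::finite \<Rightarrow> 'o::finite) \<Rightarrow> real" and f :: "'e set \<Rightarrow> ('e \<Rightarrow> 'o) \<Rightarrow> real" +
  fixes sel :: "'e set \<Rightarrow> ('e \<rightharpoonup> 'o) \<Rightarrow> 'e" and k :: nat and eps :: real
  assumes f_nonneg: "\<forall>S phi. f S phi \<ge> 0"
    and k_pos: "0 < k" and k_le: "k \<le> CARD('e)"
    and eps: "0 < eps" "eps < 1"
    and sel: "greedy_selector p f sel"
begin

abbreviation rate :: real where
  "rate \<equiv> (1 - eps) / real k"

definition candidates :: "('e \<rightharpoonup> 'o) \<Rightarrow> nat \<Rightarrow> 'e set set" where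
  "candidates psi t = {H. H \<subseteq> - dom psi \<and> card H = min (greedy_size CARD('e) k eps) (CARD('e) - t)}"

definition expected_utility :: "('e \<Rightarrow> 'o) \<Rightarrow> nat \<Rightarrow> real" where
  "expected_utility phi t = measure_pmf.expectation (greedy_run sel (greedy_size CARD('e) k eps) phi t) (\<lambda>x. f (dom (fst x)) phi)"

lemma sample_size_bounds:
  "1 \<le> (greedy_size CARD('e) k eps)"
  "real CARD('e) / real k * ln (1 / eps) \<le> real (greedy_size CARD('e) k eps)"
  "real (greedy_size CARD('e) k eps) \<le> real CARD('e) / real k * ln (1 / eps) + 1"
proof -
  have pos: "real CARD('e) / real k * ln (1 / eps) > 0" using k_pos eps by simp
  then show "1 \<le> (greedy_size CARD('e) k eps)" "real CARD('e) / real k * ln (1 / eps) \<le> real (greedy_size CARD('e) k eps)"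
    "real (greedy_size CARD('e) k eps) \<le> real CARD('e) / real k * ln (1 / eps) + 1"
    unfolding greedy_size_def by (simp_all add: Suc_le_eq le_nat_iff ceiling_le_iff of_nat_nat)
qed

lemma rate_bounds: "0 \<le> rate" "rate \<le> 1"
  using eps k_pos by (auto simp: field_simps)

lemma abs_f_le_Max: "\<bar>f S phi\<bar> \<le> Max (range (\<lambda>S. f S phi))"
  using f_nonneg by (intro Max_ge) auto

lemma greedy_run_Suc:
  "greedy_run sel (greedy_size CARD('e) k eps) phi (Suc t) = bind_pmf (greedy_run sel (greedy_size CARD('e) k eps) phi t) (\<lambda>(psi, c).
     bind_pmf (pmf_of_set (candidates psi t))
       (\<lambda>H. return_pmf (psi(sel H psi \<mapsto> phi (sel H psi)), c + card H)))"
  unfolding candidates_def by simp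

lemma finite_candidates: "finite (candidates psi t)"
  unfolding candidates_def by (rule finite_subset[of _ "Pow UNIV"]) auto

lemma candidates_nonempty_disjoint:
  assumes "card (dom psi) = t" "t < k"
  shows "candidates psi t \<noteq> {}"
    and "H \<in> candidates psi t \<Longrightarrow> H \<noteq> {} \<and> H \<inter> dom psi = {}"
proof -
  have "card (- dom psi) = CARD('e) - t"
    using assms by (simp add: Compl_eq_Diff_UNIV card_Diff_subset)
  then obtain H0 where "H0 \<subseteq> - dom psi" "card H0 = min (greedy_size CARD('e) k eps) (CARD('e) - t)"
    using obtain_subset_with_card_n[of "min (greedy_size CARD('e) k eps) (CARD('e) - t)" "- dom psi"] by auto
  then show "candidates psi t \<noteq> {}" unfolding candidates_def by auto
  show "H \<in> candidates psi t \<Longrightarrow> H \<noteq> {} \<and> H \<inter> dom psi = {}"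
    using sample_size_bounds(1) assms k_le unfolding candidates_def by auto
qed

lemma greedy_selection:
  assumes "valid_partial p psi" "card (dom psi) = t" "t < k" "H \<in> candidates psi t"
  shows "sel H psi \<in> H" "sel H psi \<notin> dom psi" "e \<in> H \<Longrightarrow> fwc p f e psi \<le> fwc p f (sel H psi) psi"
  using sel candidates_nonempty_disjoint(2)[OF assms(2-4)] assms(1) unfolding greedy_selector_def by blast+

lemma greedy_run_invariant:
  assumes pp: "p phi > 0"
  shows "t \<le> k \<Longrightarrow> x \<in> set_pmf (greedy_run sel (greedy_size CARD('e) k eps) phi t) \<Longrightarrow>
    consistent phi (fst x) \<and> card (dom (fst x)) = t \<and> snd x \<le> t * (greedy_size CARD('e) k eps)"
proof (induction t arbitrary: x)
  case 0
  then show ?case by (simp add: consistent_def)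
next
  case (Suc t)
  from Suc.prems(2) obtain psi c H where y: "(psi, c) \<in> set_pmf (greedy_run sel (greedy_size CARD('e) k eps) phi t)"
    and H: "H \<in> set_pmf (pmf_of_set (candidates psi t))"
    and x: "x = (psi(sel H psi \<mapsto> phi (sel H psi)), c + card H)"
    unfolding greedy_run_Suc by auto
  have IH: "consistent phi psi" "card (dom psi) = t" "c \<le> t * (greedy_size CARD('e) k eps)"
    using Suc.IH[OF _ y] Suc.prems by auto
  have tk: "t < k" using Suc.prems by simp
  have HC: "H \<in> candidates psi t" using H finite_candidates candidates_nonempty_disjoint(1)[OF IH(2) tk] by simp
  have "sel H psi \<notin> dom psi"
    using greedy_selection(2)[OF valid_partial_if_consistent[OF pp IH(1)] IH(2) tk HC] .
  then have "card (dom (psi(sel H psi \<mapsto> phi (sel H psi)))) = Suc t" using IH(2) by simp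
  moreover have "card H \<le> greedy_size CARD('e) k eps" using HC unfolding candidates_def by simp
  then have "c + card H \<le> Suc t * greedy_size CARD('e) k eps" using IH(3) by simp
  ultimately show ?case using consistent_upd[OF IH(1)] unfolding x fst_conv snd_conv by blast
qed

lemma greedy_run_evaluations_le:
  assumes "p phi > 0" "x \<in> set_pmf (greedy_run sel (greedy_size CARD('e) k eps) phi k)"
  shows "real (snd x) \<le> real CARD('e) * ln (1 / eps) + real k"
proof -
  have "real (snd x) \<le> real k * real (greedy_size CARD('e) k eps)"
    using greedy_run_invariant[OF assms(1) order.refl assms(2)] by (simp flip: of_nat_mult)
  also have "\<dots> \<le> real k * (real CARD('e) / real k * ln (1 / eps) + 1)"
    using sample_size_bounds(3) by (intro mult_left_mono) auto
  also have "\<dots> = real CARD('e) * ln (1 / eps) + real k" using k_pos by (simp add: field_simps)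
  finally show ?thesis .
qed

context
  fixes pol :: "('e, 'o) policy"
  assumes budget: "\<forall>phi. p phi > 0 \<longrightarrow> card (selected pol phi) \<le> k"
begin

abbreviation OPT :: real where
  "OPT \<equiv> fwc_policy p f pol"

lemma OPT_nonneg: "p phi > 0 \<Longrightarrow> 0 \<le> OPT"
  unfolding fwc_policy_def using f_nonneg by (subst Min_ge_iff) auto

lemma expected_gain_ge:
  assumes pp: "p phi > 0" and cons: "consistent phi psi" and t: "card (dom psi) = t" and tk: "t < k"
  shows "f (dom psi) phi + rate * (OPT - f (dom psi) phi) \<le>
    measure_pmf.expectation (pmf_of_set (candidates psi t)) (\<lambda>H. f (insert (sel H psi) (dom psi)) phi)"
proof -
  have v: "valid_partial p psi" by (rule valid_partial_if_consistent[OF pp cons])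
  obtain M where M: "M \<inter> dom psi = {}" "card M \<le> k"
    and opt: "OPT \<le> fcond p f (dom psi) psi + (\<Sum>e\<in>M. fwc p f e psi)"
    using fwc_policy_le_marginal_sum[OF v budget] by blast
  define h where "h = min (greedy_size CARD('e) k eps) (CARD('e) - t)"
  define C where "C = candidates psi t"
  have C_eq: "C = {H. H \<subseteq> - dom psi \<and> card H = h}" unfolding C_def candidates_def h_def ..
  have C_ne: "C \<noteq> {}" and C_fin: "finite C" using finite_candidates candidates_nonempty_disjoint(1)[OF t tk]
    unfolding C_def by auto
  have card_compl: "card (- dom psi) = CARD('e) - t"
    using t by (simp add: Compl_eq_Diff_UNIV card_Diff_subset)
  have "rate * (\<Sum>e\<in>M. fwc p f e psi) \<le> sum (\<lambda>H. fwc p f (sel H psi) psi) C / real (card C)"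
    unfolding C_eq
  proof (rule average_over_subsets_ge)
    show "h = card (- dom psi) \<or> real (card (- dom psi)) / real k * ln (1 / eps) \<le> real h"
    proof (cases "(greedy_size CARD('e) k eps) \<le> CARD('e) - t")
      case True
      have "real (card (- dom psi)) / real k * ln (1 / eps) \<le> real CARD('e) / real k * ln (1 / eps)"
        using eps k_pos card_compl by (intro mult_right_mono divide_right_mono) auto
      with True sample_size_bounds(2) show ?thesis unfolding h_def by simp
    qed (simp add: h_def card_compl)
  qed (use M eps v C_eq greedy_selection[OF v t tk] fwc_nonneg card_compl
      in \<open>auto simp: h_def C_def\<close>)
  moreover have "fwc p f (sel H psi) psi \<le> f (insert (sel H psi) (dom psi)) phi - f (dom psi) phi" for H
    by (rule fwc_le_realization_gain[OF pp cons])
  ultimately have "rate * (\<Sum>e\<in>M. fwc p f e psi)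
      \<le> sum (\<lambda>H. f (insert (sel H psi) (dom psi)) phi - f (dom psi) phi) C / real (card C)"
    by (smt (verit, best) divide_right_mono of_nat_0_le_iff sum_mono)
  also have "\<dots> = measure_pmf.expectation (pmf_of_set C) (\<lambda>H. f (insert (sel H psi) (dom psi)) phi)
      - f (dom psi) phi"
    using C_ne C_fin by (simp add: integral_pmf_of_set sum_subtractf diff_divide_distrib card_gt_0_iff)
  finally show ?thesis
    using opt fcond_eq_realization[OF pp cons] rate_bounds unfolding C_def
    by (smt (verit) mult_left_mono)
qed

lemma expected_utility_Suc_ge:
  assumes pp: "p phi > 0" and tk: "t < k"
  shows "(1 - rate) * expected_utility phi t + rate * OPT \<le> expected_utility phi (Suc t)"
proof -
  define B where "B = Max (range (\<lambda>S. f S phi))"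
  have f_le: "\<bar>f S phi\<bar> \<le> B" for S unfolding B_def by (rule abs_f_le_Max)
  define gain where "gain psi = measure_pmf.expectation (pmf_of_set (candidates psi t))
      (\<lambda>H. f (insert (sel H psi) (dom psi)) phi)" for psi
  have gain_le: "\<bar>gain psi\<bar> \<le> B" for psi
    using expectation_bounded[of "\<lambda>H. f (insert (sel H psi) (dom psi)) phi" B] f_nonneg f_le
    unfolding gain_def by (simp add: abs_le_iff)
  have affine_le: "\<bar>(1 - rate) * f S phi + rate * OPT\<bar> \<le> B + \<bar>rate * OPT\<bar>" for S
  proof -
    have "\<bar>(1 - rate) * f S phi\<bar> \<le> \<bar>f S phi\<bar>"
      using rate_bounds mult_left_le_one_le[of "\<bar>f S phi\<bar>" "1 - rate"] by (simp add: abs_mult)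
    then show ?thesis using f_le[of S] abs_triangle_ineq[of "(1 - rate) * f S phi" "rate * OPT"]
      by (smt (verit))
  qed
  have "(1 - rate) * expected_utility phi t + rate * OPT
      = measure_pmf.expectation (greedy_run sel (greedy_size CARD('e) k eps) phi t)
          (\<lambda>y. (1 - rate) * f (dom (fst y)) phi + rate * OPT)"
    unfolding expected_utility_def by (rule expectation_affine_bounded[OF f_le, symmetric])
  also have "\<dots> \<le> measure_pmf.expectation (greedy_run sel (greedy_size CARD('e) k eps) phi t)
      (\<lambda>y. gain (fst y))"
  proof (rule expectation_mono_on_support[OF _ affine_le gain_le])
    fix y assume "y \<in> set_pmf (greedy_run sel (greedy_size CARD('e) k eps) phi t)"
    then have "consistent phi (fst y)" "card (dom (fst y)) = t"
      using greedy_run_invariant[OF pp less_imp_le[OF tk]] by auto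
    from expected_gain_ge[OF pp this tk]
    show "(1 - rate) * f (dom (fst y)) phi + rate * OPT \<le> gain (fst y)"
      unfolding gain_def by (simp add: algebra_simps)
  qed
  also have "\<dots> = expected_utility phi (Suc t)"
    unfolding expected_utility_def greedy_run_Suc
    by (simp add: expectation_bind_pmf_bounded[where B=B] f_le gain_def split_beta)
  finally show ?thesis .
qed

lemma optimum_gap_le_power:
  assumes pp: "p phi > 0"
  shows "t \<le> k \<Longrightarrow> OPT - expected_utility phi t \<le> (1 - rate) ^ t * (OPT - f {} phi)"
proof (induction t)
  case 0
  then show ?case by (simp add: expected_utility_def)
next
  case (Suc t)
  have "OPT - expected_utility phi (Suc t) \<le> (1 - rate) * (OPT - expected_utility phi t)"
    using expected_utility_Suc_ge[OF pp, of t] Suc.prems by (simp add: algebra_simps)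
  also have "\<dots> \<le> (1 - rate) * ((1 - rate) ^ t * (OPT - f {} phi))"
    using Suc rate_bounds by (intro mult_left_mono) auto
  finally show ?case by simp
qed

lemma expected_utility_ge:
  assumes pp: "p phi > 0"
  shows "(1 - 1 / exp 1 - eps) * OPT \<le> expected_utility phi k"
proof -
  have "OPT - expected_utility phi k \<le> (1 - rate) ^ k * (OPT - f {} phi)"
    by (rule optimum_gap_le_power[OF pp order.refl])
  also have "\<dots> \<le> (1 - rate) ^ k * OPT"
    using f_nonneg rate_bounds by (intro mult_left_mono) auto
  also have "\<dots> \<le> (eps + 1 / exp 1) * OPT"
    using one_minus_div_power_le[OF eps k_pos] OPT_nonneg[OF pp] by (intro mult_right_mono)
  finally show ?thesis by (simp add: algebra_simps)
qed

lemma greedy_value_ge: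
  assumes "\<exists>phi. p phi > 0"
  shows "(1 - 1 / exp 1 - eps) * OPT \<le> greedy_value p f sel (greedy_size CARD('e) k eps) k"
  unfolding greedy_value_def using assms expected_utility_ge
  by (subst Min_ge_iff) (auto simp: expected_utility_def)

end

end

theorem theorem3:
  fixes p :: "('e::finite \<Rightarrow> 'o::finite) \<Rightarrow> real"
    and f :: "'e set \<Rightarrow> ('e \<Rightarrow> 'o) \<Rightarrow> real"
    and sel :: "'e set \<Rightarrow> ('e \<rightharpoonup> 'o) \<Rightarrow> 'e"
    and k :: nat and eps :: real
  assumes p_nonneg: "\<forall>phi. p phi \<ge> 0"
    and p_sum: "(\<Sum>phi\<in>UNIV. p phi) = 1"
    and f_nonneg: "\<forall>S phi. f S phi \<ge> 0"
    and k_pos: "0 < k" and k_le: "k \<le> CARD('e)"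
    and eps: "0 < eps" "eps < 1"
    and mono: "wc_monotone p f"
    and submod: "wc_submodular p f"
    and mindep: "minimal_dependency p f"
    and sel: "greedy_selector p f sel"
  shows "(\<forall>pol :: ('e, 'o) policy. (\<forall>phi. p phi > 0 \<longrightarrow> card (selected pol phi) \<le> k) \<longrightarrow>
            greedy_value p f sel (greedy_size CARD('e) k eps) k \<ge> (1 - 1 / exp 1 - eps) * fwc_policy p f pol)
       \<and> (\<forall>phi. p phi > 0 \<longrightarrow> (\<forall>x \<in> set_pmf (greedy_run sel (greedy_size CARD('e) k eps) phi k).
            real (snd x) \<le> real CARD('e) * ln (1 / eps) + real k))"
proof -
  interpret greedy_setting p f sel k eps
    by unfold_locales (use assms in auto)
  have "\<exists>phi. p phi > 0"
  proof (rule ccontr)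
    assume "\<nexists>phi. p phi > 0"
    then have "(\<Sum>phi\<in>UNIV. p phi) \<le> 0" by (intro sum_nonpos) (simp add: not_less)
    with p_sum show False by simp
  qed
  then show ?thesis
    by (intro conjI allI impI ballI greedy_value_ge greedy_run_evaluations_le) auto
qed

end
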